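(* Let $N\ge4$, let $e_1,\dots,e_N$ be the standard basis of $\mathbb{R}^N$, $F(x)=\prod_{i=1}^N|x-e_i|^2$, $f=\log F$, and $B=\frac1N\sum_{i=1}^N e_i$. Then $F$ has its $N$ absolute minima at $e_1,\dots,e_N$; $B$ is a critical point of $f$ whose Hessian has the eigenvalue $\frac{2N^2}{N-1}$ with multiplicity $1$ (eigenvector $B$) and the eigenvalue $2(N-3)\left(\frac{N}{N-1}\right)^2$ with multiplicity $N-1$, so $B$ is a nondegenerate local minimum; and the $N$ points $Q_i=\frac{2}{N-1}B+\frac{N-3}{N-1}e_i$ ($1\le i\le N$) are nondegenerate critical points of $f$ of negativity index $1$.
   Context: $|\cdot|$ is the Euclidean norm. The negativity index of a nondegenerate critical point is the number of negative eigenvalues of the Hessian. *)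

theory Defs
  imports "HOL-Analysis.Analysis"
begin

definition ebasis :: "'n::finite \<Rightarrow> real^'n" where
  "ebasis i = axis i 1"

definition Fprod :: "real^'n::finite \<Rightarrow> real" where
  "Fprod x = (\<Prod>i\<in>UNIV. (norm (x - ebasis i))\<^sup>2)"

definition flog :: "real^'n::finite \<Rightarrow> real" where
  "flog x = ln (Fprod x)"

definition bary :: "real^'n::finite" where
  "bary = (1 / real CARD('n)) *\<^sub>R (\<Sum>i\<in>UNIV. ebasis i)"

definition Qpt :: "'n::finite \<Rightarrow> real^'n" where
  "Qpt i = (2 / (real CARD('n) - 1)) *\<^sub>R bary
          + ((real CARD('n) - 3) / (real CARD('n) - 1)) *\<^sub>R ebasis i"

definition critical_point :: "(real^'n::finite \<Rightarrow> real) \<Rightarrow> real^'n \<Rightarrow> bool" where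
  "critical_point g x \<longleftrightarrow> (g has_derivative (\<lambda>h. 0)) (at x)"

definition has_hessian :: "(real^'n::finite \<Rightarrow> real) \<Rightarrow> real^'n^'n \<Rightarrow> real^'n \<Rightarrow> bool" where
  "has_hessian g H x \<longleftrightarrow>
     (\<exists>grad. (\<forall>\<^sub>F y in nhds x. (g has_derivative (\<lambda>h. grad y \<bullet> h)) (at y))
            \<and> (grad has_derivative (\<lambda>h. H *v h)) (at x))"

definition eigenspace :: "real^'n^'n::finite \<Rightarrow> real \<Rightarrow> (real^'n) set" where
  "eigenspace H l = {v. H *v v = l *\<^sub>R v}"

definition is_eigenvalue :: "real^'n^'n::finite \<Rightarrow> real \<Rightarrow> bool" where
  "is_eigenvalue H l \<longleftrightarrow> (\<exists>v. v \<noteq> 0 \<and> H *v v = l *\<^sub>R v)"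

text \<open>Multiplicity of an eigenvalue (dimension of eigenspace; equals algebraic
  multiplicity for the symmetric Hessian).\<close>
definition eig_mult :: "real^'n^'n::finite \<Rightarrow> real \<Rightarrow> nat" where
  "eig_mult H l = dim (eigenspace H l)"

definition neg_index :: "real^'n^'n::finite \<Rightarrow> nat" where
  "neg_index H = (\<Sum>l\<in>{l. l < 0 \<and> is_eigenvalue H l}. eig_mult H l)"

definition nondegenerate_critical_point :: "(real^'n::finite \<Rightarrow> real) \<Rightarrow> real^'n \<Rightarrow> bool" where
  "nondegenerate_critical_point g x \<longleftrightarrow>
     critical_point g x \<and> (\<exists>H. has_hessian g H x \<and> det H \<noteq> 0)"

definition local_min :: "(real^'n::finite \<Rightarrow> real) \<Rightarrow> real^'n \<Rightarrow> bool" where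
  "local_min g x \<longleftrightarrow> (\<exists>e>0. \<forall>y\<in>ball x e. g x \<le> g y)"

end

theory Submission
  imports Defs
begin

text \<open>Off the vertices, \<open>f = \<Sum>\<^sub>k ln |x - e\<^sub>k|\<^sup>2\<close>, so gradient and Hessian are explicit sums over
  the vertices; the identity \<open>\<Sum>\<^sub>k (x - e\<^sub>k)(x - e\<^sub>k)\<^sup>T = I - N B B\<^sup>T + N (x - B)(x - B)\<^sup>T\<close>
  reduces them to a few rank-one terms. At \<open>B\<close> all vertices are at the same distance, so the Hessian
  is \<open>\<nu> I + \<alpha> B B\<^sup>T\<close>. The point \<open>Q\<^sub>i\<close> lies on the segment from \<open>B\<close> to \<open>e\<^sub>i\<close>, where the
  gradient is a multiple of \<open>d = e\<^sub>i - B\<close> and all distances but the one to \<open>e\<^sub>i\<close> coincide; the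
  Hessian there is \<open>\<mu> I + \<alpha> B B\<^sup>T + \<beta> d d\<^sup>T\<close> with \<open>B \<bottom> d\<close>, whose only negative eigenvalue
  is \<open>\<mu> + \<beta> |d|\<^sup>2\<close>, with eigenvector \<open>d\<close>. That \<open>B\<close> is a local minimum follows from a direct
  second-order estimate of \<open>f (B + d) - f B = \<Sum>\<^sub>k ln (1 + u\<^sub>k)\<close>.\<close>

section \<open>Sums over the vertices of the simplex\<close>

lemma ebasis_component [simp]: "ebasis k $ j = (if j = k then 1 else 0)"
  by (simp add: ebasis_def axis_def)

lemma inner_ebasis [simp]: "ebasis k \<bullet> h = h $ k" "h \<bullet> ebasis k = h $ k"
  by (simp_all add: ebasis_def inner_axis inner_commute)

lemma bary_component [simp]: "(bary :: real^'n::finite) $ j = 1 / real CARD('n)"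
  by (simp add: bary_def sum_component)

lemma inner_bary: "(bary :: real^'n::finite) \<bullet> h = (\<Sum>j\<in>UNIV. h $ j) / real CARD('n)"
  by (simp add: inner_vec_def sum_divide_distrib)

lemma inner_bary_bary: "(bary :: real^'n::finite) \<bullet> bary = 1 / real CARD('n)"
  by (simp add: inner_bary)

lemma bary_neq_0: "(bary :: real^'n::finite) \<noteq> 0"
  using inner_bary_bary[where 'n='n] by auto

lemma inner_bary_ebasis_diff: "(bary :: real^'n::finite) \<bullet> (ebasis i - bary) = 0"
  by (simp add: inner_diff_right inner_bary_bary)

lemma inner_ebasis_diff_bary_self:
  "(ebasis i - bary) \<bullet> (ebasis i - bary :: real^'n::finite) = (real CARD('n) - 1) / real CARD('n)"
  by (simp add: inner_diff_left inner_diff_right inner_bary_bary inner_commute diff_divide_distrib)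

lemma sum_ebasis: "(\<Sum>k\<in>UNIV. ebasis k) = real CARD('n) *\<^sub>R (bary :: real^'n::finite)"
  by (simp add: bary_def)

lemma sum_diff_ebasis:
  "(\<Sum>k\<in>UNIV. x - ebasis k) = real CARD('n) *\<^sub>R (x - bary :: real^'n::finite)"
  by (simp add: sum_subtractf sum_ebasis scaleR_diff_right sum_constant_scaleR del: sum_constant)

lemma sum_component_scaleR_ebasis: "(\<Sum>k\<in>UNIV. (h $ k) *\<^sub>R ebasis k) = (h :: real^'n::finite)"
  by (simp add: vec_eq_iff sum_component if_distrib cong: if_cong)

lemma sum_outer_diff_ebasis:
  fixes x h :: "real^'n::finite"
  shows "(\<Sum>k\<in>UNIV. ((x - ebasis k) \<bullet> h) *\<^sub>R (x - ebasis k))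
     = h - (real CARD('n) * (bary \<bullet> h)) *\<^sub>R bary
         + (real CARD('n) * ((x - bary) \<bullet> h)) *\<^sub>R (x - bary)"
proof -
  let ?N = "real CARD('n)"
  have "(\<Sum>k\<in>UNIV. ((x - ebasis k) \<bullet> h) *\<^sub>R (x - ebasis k))
     = (\<Sum>k\<in>UNIV. (x \<bullet> h) *\<^sub>R x - (x \<bullet> h) *\<^sub>R ebasis k - (h $ k) *\<^sub>R x + (h $ k) *\<^sub>R ebasis k)"
    by (intro sum.cong) (auto simp: inner_diff_left algebra_simps)
  also have "\<dots> = ?N *\<^sub>R ((x \<bullet> h) *\<^sub>R x) - (x \<bullet> h) *\<^sub>R (?N *\<^sub>R bary)
      - (?N * (bary \<bullet> h)) *\<^sub>R x + h"
    by (simp add: sum.distrib sum_subtractf scaleR_sum_right[symmetric] sum_ebasis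
        scaleR_sum_left[symmetric] sum_component_scaleR_ebasis inner_bary sum_constant_scaleR
        del: sum_constant)
  finally show ?thesis
    by (simp add: algebra_simps)
qed

lemma sum_remove_one:
  assumes "\<And>k. k \<noteq> i \<Longrightarrow> f k = g k"
  shows "(\<Sum>k\<in>(UNIV::'n::finite set). f k) = (\<Sum>k\<in>UNIV. g k) - g i + (f i :: 'a::ab_group_add)"
proof -
  have "(\<Sum>k\<in>UNIV. f k) = f i + (\<Sum>k\<in>UNIV-{i}. g k)"
    using assms by (simp add: sum.remove[of UNIV i])
  then show ?thesis
    by (simp add: sum_diff1 algebra_simps)
qed

section \<open>Low-rank updates of a multiple of the identity\<close>

lemma det_neq_0_if_not_eigenvalue_0:
  fixes H :: "real^'n^'n::finite"
  assumes "\<not> is_eigenvalue H 0"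
  shows "det H \<noteq> 0"
  using assms invertible_det_nz invertible_left_inverse matrix_left_invertible_ker
  unfolding is_eigenvalue_def by (metis scale_zero_left)

lemma rank_one_update_eigen:
  fixes H :: "real^'n^'n::finite"
  assumes H: "\<And>h. H *v h = \<mu> *\<^sub>R h + (\<alpha> * (u \<bullet> h)) *\<^sub>R u"
    and "u \<noteq> 0" "\<alpha> \<noteq> 0"
  shows "eigenspace H (\<mu> + \<alpha> * (u \<bullet> u)) = span {u}"
    and "eigenspace H \<mu> = {h. u \<bullet> h = 0}"
    and "is_eigenvalue H l \<Longrightarrow> l = \<mu> \<or> l = \<mu> + \<alpha> * (u \<bullet> u)"
proof -
  have "h \<in> eigenspace H (\<mu> + \<alpha> * (u \<bullet> u)) \<longleftrightarrow> h \<in> span {u}" for h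
  proof -
    have "h \<in> eigenspace H (\<mu> + \<alpha> * (u \<bullet> u))
        \<longleftrightarrow> \<alpha> *\<^sub>R ((u \<bullet> u) *\<^sub>R h) = \<alpha> *\<^sub>R ((u \<bullet> h) *\<^sub>R u)"
      by (auto simp: eigenspace_def H algebra_simps)
    also have "\<dots> \<longleftrightarrow> (u \<bullet> u) *\<^sub>R h = (u \<bullet> h) *\<^sub>R u"
      using \<open>\<alpha> \<noteq> 0\<close> by (simp del: scaleR_scaleR)
    also have "\<dots> \<longleftrightarrow> h = ((u \<bullet> h) / (u \<bullet> u)) *\<^sub>R u"
      using \<open>u \<noteq> 0\<close> by (simp add: eq_vector_fraction_iff)
    also have "\<dots> \<longleftrightarrow> h \<in> span {u}"
      using \<open>u \<noteq> 0\<close> by (auto simp: span_singleton)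
    finally show ?thesis .
  qed
  then show "eigenspace H (\<mu> + \<alpha> * (u \<bullet> u)) = span {u}" by blast
  show "eigenspace H \<mu> = {h. u \<bullet> h = 0}"
    using assms by (auto simp: eigenspace_def H)
  assume "is_eigenvalue H l"
  then obtain h where "h \<noteq> 0" and hl: "(l - \<mu>) *\<^sub>R h = (\<alpha> * (u \<bullet> h)) *\<^sub>R u"
    by (auto simp: is_eigenvalue_def H algebra_simps)
  show "l = \<mu> \<or> l = \<mu> + \<alpha> * (u \<bullet> u)"
  proof (cases "u \<bullet> h = 0")
    case True
    then show ?thesis
      using hl \<open>h \<noteq> 0\<close> by simp
  next
    case False
    have "(l - \<mu>) * (u \<bullet> h) = (\<alpha> * (u \<bullet> u)) * (u \<bullet> h)"
      using arg_cong[OF hl, of "inner u"] by simp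
    then show ?thesis
      using False by simp
  qed
qed

lemma rank_two_update_eigen:
  fixes H :: "real^'n^'n::finite"
  assumes H: "\<And>h. H *v h = \<mu> *\<^sub>R h + (\<alpha> * (u \<bullet> h)) *\<^sub>R u + (\<beta> * (v \<bullet> h)) *\<^sub>R v"
    and "u \<bullet> v = 0"
  shows "H *v v = (\<mu> + \<beta> * (v \<bullet> v)) *\<^sub>R v"
    and "H *v h = l *\<^sub>R h \<Longrightarrow> l \<noteq> \<mu> \<Longrightarrow> l \<noteq> \<mu> + \<alpha> * (u \<bullet> u) \<Longrightarrow> h \<in> span {v}"
proof -
  show "H *v v = (\<mu> + \<beta> * (v \<bullet> v)) *\<^sub>R v"
    using \<open>u \<bullet> v = 0\<close> by (simp add: H inner_commute algebra_simps)
  assume hl: "H *v h = l *\<^sub>R h" and "l \<noteq> \<mu>" "l \<noteq> \<mu> + \<alpha> * (u \<bullet> u)"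
  have "(l - \<mu> - \<alpha> * (u \<bullet> u)) * (u \<bullet> h) = 0"
    using arg_cong[OF hl, of "inner u"] \<open>u \<bullet> v = 0\<close> by (simp add: H algebra_simps)
  then have "u \<bullet> h = 0"
    using \<open>l \<noteq> \<mu> + \<alpha> * (u \<bullet> u)\<close> by simp
  then have "(l - \<mu>) *\<^sub>R h = (\<beta> * (v \<bullet> h)) *\<^sub>R v"
    using hl by (simp add: H algebra_simps)
  then have "h = (\<beta> * (v \<bullet> h) / (l - \<mu>)) *\<^sub>R v"
    using \<open>l \<noteq> \<mu>\<close> by (simp add: eq_vector_fraction_iff)
  then show "h \<in> span {v}"
    by (metis span_base span_mul singletonI)
qed

lemma rank_two_update_index_one:
  fixes H :: "real^'n^'n::finite"
  assumes H: "\<And>h. H *v h = \<mu> *\<^sub>R h + (\<alpha> * (u \<bullet> h)) *\<^sub>R u + (\<beta> * (v \<bullet> h)) *\<^sub>R v"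
    and "u \<bullet> v = 0" "v \<noteq> 0"
    and "\<mu> > 0" "\<mu> + \<alpha> * (u \<bullet> u) > 0" "\<mu> + \<beta> * (v \<bullet> v) < 0"
  shows "neg_index H = 1" and "det H \<noteq> 0"
proof -
  let ?\<kappa> = "\<mu> + \<beta> * (v \<bullet> v)"
  note eigen = rank_two_update_eigen[OF H \<open>u \<bullet> v = 0\<close>]
  have only_negative: "l = ?\<kappa>" if eig: "H *v h = l *\<^sub>R h" "h \<noteq> 0" "l < 0" for h l
  proof -
    obtain c where h: "h = c *\<^sub>R v"
      using eigen(2)[OF eig(1)] eig(3) assms(4,5) by (force simp: span_singleton)
    then have "(c * ?\<kappa>) *\<^sub>R v = (c * l) *\<^sub>R v" and "c \<noteq> 0"
      using eig(1,2) eigen(1) by (auto simp: matrix_vector_mult_scaleR)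
    then show ?thesis
      using \<open>v \<noteq> 0\<close> by simp
  qed
  have "eigenspace H ?\<kappa> = span {v}"
  proof (intro set_eqI iffI)
    show "h \<in> span {v}" if "h \<in> eigenspace H ?\<kappa>" for h
      using that assms(4,5,6) by (intro eigen(2)) (auto simp: eigenspace_def)
    show "h \<in> eigenspace H ?\<kappa>" if "h \<in> span {v}" for h
      using that eigen(1) by (auto simp: eigenspace_def span_singleton matrix_vector_mult_scaleR)
  qed
  moreover have "{l. l < 0 \<and> is_eigenvalue H l} = {?\<kappa>}"
  proof (intro set_eqI iffI)
    show "l \<in> {?\<kappa>}" if "l \<in> {l. l < 0 \<and> is_eigenvalue H l}" for l
      using that only_negative unfolding is_eigenvalue_def by blast
    show "l \<in> {l. l < 0 \<and> is_eigenvalue H l}" if "l \<in> {?\<kappa>}" for l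
      using that eigen(1) assms(3,6) unfolding is_eigenvalue_def by blast
  qed
  ultimately show "neg_index H = 1"
    using \<open>v \<noteq> 0\<close> by (simp add: neg_index_def eig_mult_def)
  have "\<not> is_eigenvalue H 0"
  proof
    assume "is_eigenvalue H 0"
    then obtain h where "h \<noteq> 0" "h \<in> span {v}" "H *v h = 0"
      using eigen(2) assms(4,5) unfolding is_eigenvalue_def by fastforce
    then show False
      using eigen(1) assms(6) by (auto simp: span_singleton matrix_vector_mult_scaleR)
  qed
  then show "det H \<noteq> 0"
    by (rule det_neq_0_if_not_eigenvalue_0)
qed

section \<open>Gradient and Hessian of the logarithm\<close>

definition basis_sqdist :: "real^'n::finite \<Rightarrow> 'n \<Rightarrow> real" where
  "basis_sqdist y k = (y - ebasis k) \<bullet> (y - ebasis k)"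

lemma basis_sqdist_expand: "basis_sqdist y k = y \<bullet> y - 2 * y $ k + 1"
  by (simp add: basis_sqdist_def inner_diff_left inner_diff_right inner_commute)

lemma basis_sqdist_pos: "y \<notin> range ebasis \<Longrightarrow> basis_sqdist y k > 0"
  unfolding basis_sqdist_def by (metis inner_gt_zero_iff rangeI right_minus_eq)

lemma basis_sqdist_neq_0: "y \<notin> range ebasis \<Longrightarrow> basis_sqdist y k \<noteq> 0"
  using basis_sqdist_pos[of y k] by simp

lemma flog_eq_sum_ln:
  "y \<notin> range ebasis \<Longrightarrow> flog y = (\<Sum>k\<in>UNIV. ln (basis_sqdist y k))"
  using basis_sqdist_neq_0[of y]
  by (simp add: flog_def Fprod_def basis_sqdist_def power2_norm_eq_inner ln_prod)

lemma open_compl_range_ebasis: "open (- range (ebasis :: 'n::finite \<Rightarrow> real^'n))"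
  by (simp add: open_Compl finite_imp_closed)

definition grad_flog :: "real^'n::finite \<Rightarrow> real^'n" where
  "grad_flog y = (\<Sum>k\<in>UNIV. (2 / basis_sqdist y k) *\<^sub>R (y - ebasis k))"

definition hess_flog :: "real^'n::finite \<Rightarrow> real^'n \<Rightarrow> real^'n" where
  "hess_flog y h = (\<Sum>k\<in>UNIV. (2 / basis_sqdist y k) *\<^sub>R h
      - (4 * ((y - ebasis k) \<bullet> h) / (basis_sqdist y k)\<^sup>2) *\<^sub>R (y - ebasis k))"

lemma has_derivative_basis_sqdist:
  "((\<lambda>z. basis_sqdist z k) has_derivative (\<lambda>h. 2 * ((y - ebasis k) \<bullet> h))) (at y)"
  unfolding basis_sqdist_def
  by (auto intro!: derivative_eq_intros simp: inner_commute)

lemma has_derivative_flog: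
  assumes "y \<notin> range ebasis"
  shows "(flog has_derivative (\<lambda>h. grad_flog y \<bullet> h)) (at y)"
proof -
  have "((\<lambda>z. \<Sum>k\<in>UNIV. ln (basis_sqdist z k)) has_derivative (\<lambda>h. grad_flog y \<bullet> h)) (at y)"
    using basis_sqdist_pos[OF assms] basis_sqdist_neq_0[OF assms]
    by (auto intro!: derivative_eq_intros has_derivative_basis_sqdist ext sum.cong
        simp: grad_flog_def inner_sum_left inner_diff_left field_simps)
  then show ?thesis
    by (rule has_derivative_transform_within_open[OF _ open_compl_range_ebasis])
      (use assms in \<open>auto simp: flog_eq_sum_ln\<close>)
qed

lemma has_derivative_grad_flog:
  assumes "x \<notin> range ebasis"
  shows "(grad_flog has_derivative hess_flog x) (at x)"
  using basis_sqdist_neq_0[OF assms]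
  unfolding grad_flog_def hess_flog_def[abs_def]
  by (auto intro!: derivative_eq_intros has_derivative_basis_sqdist
      simp: field_simps power2_eq_square)

lemma matrix_hess_flog:
  assumes "x \<notin> range ebasis"
  shows "matrix (hess_flog x) *v h = hess_flog x h"
  using has_derivative_linear[OF has_derivative_grad_flog[OF assms]] by simp

lemma has_hessian_flog:
  assumes "x \<notin> range ebasis"
  shows "has_hessian flog (matrix (hess_flog x)) x"
  unfolding has_hessian_def
proof (intro exI conjI)
  show "\<forall>\<^sub>F y in nhds x. (flog has_derivative (\<lambda>h. grad_flog y \<bullet> h)) (at y)"
    using assms open_compl_range_ebasis has_derivative_flog
    by (auto simp: eventually_nhds intro!: exI[of _ "- range ebasis"])
  show "(grad_flog has_derivative (\<lambda>h. matrix (hess_flog x) *v h)) (at x)"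
    using has_derivative_grad_flog[OF assms] by (simp add: matrix_hess_flog[OF assms])
qed

lemma critical_point_flog:
  "x \<notin> range ebasis \<Longrightarrow> grad_flog x = 0 \<Longrightarrow> critical_point flog x"
  unfolding critical_point_def using has_derivative_flog[of x] by simp

lemma grad_flog_eq:
  fixes x :: "real^'n::finite"
  assumes "\<And>k. k \<noteq> i \<Longrightarrow> basis_sqdist x k = s" and "basis_sqdist x i = r"
  shows "grad_flog x = (2 * real CARD('n) / s) *\<^sub>R (x - bary) + (2 / r - 2 / s) *\<^sub>R (x - ebasis i)"
proof -
  have "grad_flog x = (\<Sum>k\<in>UNIV. (2 / s) *\<^sub>R (x - ebasis k)) - (2 / s) *\<^sub>R (x - ebasis i)
      + (2 / r) *\<^sub>R (x - ebasis i)"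
    unfolding grad_flog_def using assms by (subst sum_remove_one[of i]) auto
  also have "(\<Sum>k\<in>UNIV. (2 / s) *\<^sub>R (x - ebasis k)) = (2 / s) *\<^sub>R (real CARD('n) *\<^sub>R (x - bary))"
    by (simp only: scaleR_sum_right[symmetric] sum_diff_ebasis)
  finally show ?thesis
    by (simp add: algebra_simps)
qed

lemma hess_flog_eq:
  fixes x :: "real^'n::finite"
  assumes "\<And>k. k \<noteq> i \<Longrightarrow> basis_sqdist x k = s" and "basis_sqdist x i = r"
  shows "hess_flog x h = ((real CARD('n) - 1) * (2 / s) + 2 / r) *\<^sub>R h
      - (4 / s\<^sup>2) *\<^sub>R (h - (real CARD('n) * (bary \<bullet> h)) *\<^sub>R bary
                        + (real CARD('n) * ((x - bary) \<bullet> h)) *\<^sub>R (x - bary))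
      - ((4 / r\<^sup>2 - 4 / s\<^sup>2) * ((x - ebasis i) \<bullet> h)) *\<^sub>R (x - ebasis i)"
proof -
  let ?P = "\<lambda>k. ((x - ebasis k) \<bullet> h) *\<^sub>R (x - ebasis k)"
  have "hess_flog x h = (\<Sum>k\<in>UNIV. (2 / basis_sqdist x k) *\<^sub>R h)
      - (\<Sum>k\<in>UNIV. (4 / (basis_sqdist x k)\<^sup>2) *\<^sub>R ?P k)"
    by (simp add: hess_flog_def sum_subtractf)
  also have "(\<Sum>k\<in>UNIV. (2 / basis_sqdist x k) *\<^sub>R h)
      = ((real CARD('n) - 1) * (2 / s) + 2 / r) *\<^sub>R h"
    using assms by (subst sum_remove_one[of i])
      (auto simp: sum_constant_scaleR scaleR_add_left scaleR_diff_left left_diff_distrib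
        diff_divide_distrib simp del: sum_constant)
  also have "(\<Sum>k\<in>UNIV. (4 / (basis_sqdist x k)\<^sup>2) *\<^sub>R ?P k)
      = (\<Sum>k\<in>UNIV. (4 / s\<^sup>2) *\<^sub>R ?P k) - (4 / s\<^sup>2) *\<^sub>R ?P i
        + (4 / (basis_sqdist x i)\<^sup>2) *\<^sub>R ?P i"
    by (rule sum_remove_one) (simp add: assms)
  also have "\<dots> = (4 / s\<^sup>2) *\<^sub>R (\<Sum>k\<in>UNIV. ?P k)
        + ((4 / r\<^sup>2 - 4 / s\<^sup>2) * ((x - ebasis i) \<bullet> h)) *\<^sub>R (x - ebasis i)"
    by (simp only: assms(2) scaleR_sum_right[symmetric] scaleR_scaleR[symmetric] scaleR_diff_left)
      simp
  finally show ?thesis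
    by (simp only: sum_outer_diff_ebasis diff_diff_eq)
qed

section \<open>The barycentre\<close>

lemma basis_sqdist_bary:
  "basis_sqdist (bary :: real^'n::finite) k = (real CARD('n) - 1) / real CARD('n)"
  by (simp add: basis_sqdist_expand inner_bary_bary diff_divide_distrib)

lemma bary_notin_range_ebasis:
  assumes "CARD('n::finite) \<ge> 2"
  shows "(bary :: real^'n) \<notin> range ebasis"
proof
  assume "bary \<in> range (ebasis :: 'n \<Rightarrow> real^'n)"
  then obtain k where "basis_sqdist (bary :: real^'n) k = 0"
    by (auto simp: basis_sqdist_def)
  then show False
    using assms by (simp add: basis_sqdist_bary)
qed

lemma grad_flog_bary: "grad_flog (bary :: real^'n::finite) = 0"
proof -
  obtain i :: 'n where True by simp
  show ?thesis
    using grad_flog_eq[of i bary, OF basis_sqdist_bary basis_sqdist_bary] by simp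
qed

lemma hess_flog_bary:
  assumes "CARD('n::finite) \<ge> 2"
  defines "N \<equiv> real CARD('n)"
  shows "hess_flog (bary :: real^'n) h = (2 * (N - 3) * (N / (N - 1))\<^sup>2) *\<^sub>R h
      + (4 * N ^ 3 / (N - 1)\<^sup>2 * (bary \<bullet> h)) *\<^sub>R bary"
proof -
  obtain i :: 'n where True by simp
  let ?s = "(N - 1) / N"
  have "hess_flog (bary :: real^'n) h
      = ((N - 1) * (2 / ?s) + 2 / ?s - 4 / ?s\<^sup>2) *\<^sub>R h + (4 * N / ?s\<^sup>2 * (bary \<bullet> h)) *\<^sub>R bary"
    using hess_flog_eq[of i bary, OF basis_sqdist_bary basis_sqdist_bary, of h]
    by (simp add: N_def algebra_simps)
  moreover have "N - 1 \<noteq> 0" "N \<noteq> 0"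
    using assms by auto
  then have "(N - 1) * (2 / ?s) + 2 / ?s - 4 / ?s\<^sup>2 = 2 * (N - 3) * (N / (N - 1))\<^sup>2"
    and "4 * N / ?s\<^sup>2 = 4 * N ^ 3 / (N - 1)\<^sup>2"
    by (simp_all add: divide_simps) (simp_all add: algebra_simps power2_eq_square power3_eq_cube)
  ultimately show ?thesis
    by simp
qed

lemma hess_flog_bary_spectrum:
  assumes "CARD('n::finite) \<ge> 4"
  defines "N \<equiv> real CARD('n)" and "H \<equiv> matrix (hess_flog (bary :: real^'n))"
  shows "H *v bary = (2 * N\<^sup>2 / (N - 1)) *\<^sub>R bary"
    and "eig_mult H (2 * N\<^sup>2 / (N - 1)) = 1"
    and "eig_mult H (2 * (N - 3) * (N / (N - 1))\<^sup>2) = CARD('n) - 1"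
    and "det H \<noteq> 0"
proof -
  let ?\<nu> = "2 * (N - 3) * (N / (N - 1))\<^sup>2" and ?\<alpha> = "4 * N ^ 3 / (N - 1)\<^sup>2"
  have N: "N \<ge> 4"
    using assms(1) by (simp add: N_def)
  have bary: "(bary :: real^'n) \<notin> range ebasis"
    using assms(1) by (intro bary_notin_range_ebasis) simp
  have H: "H *v h = ?\<nu> *\<^sub>R h + (?\<alpha> * (bary \<bullet> h)) *\<^sub>R bary" for h
    using hess_flog_bary[of h] matrix_hess_flog[OF bary] assms(1) by (simp add: H_def N_def)
  have \<lambda>: "?\<nu> + ?\<alpha> * ((bary :: real^'n) \<bullet> bary) = 2 * N\<^sup>2 / (N - 1)"
    using N unfolding inner_bary_bary N_def[symmetric]
    by (simp add: divide_simps) (simp add: algebra_simps power2_eq_square power3_eq_cube)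
  have "?\<alpha> \<noteq> 0"
    using N by simp
  note eigen = rank_one_update_eigen[OF H bary_neq_0 this, unfolded \<lambda>]
  show "H *v bary = (2 * N\<^sup>2 / (N - 1)) *\<^sub>R bary"
    using eigen(1) span_base[of bary "{bary}"] unfolding eigenspace_def by blast
  show "eig_mult H (2 * N\<^sup>2 / (N - 1)) = 1"
    using bary_neq_0 by (simp add: eig_mult_def eigen(1))
  show "eig_mult H ?\<nu> = CARD('n) - 1"
    unfolding eig_mult_def eigen(2) using dim_hyperplane[OF bary_neq_0] by simp
  have "\<not> is_eigenvalue H 0"
    using eigen(3)[of 0] N by auto
  then show "det H \<noteq> 0"
    by (rule det_neq_0_if_not_eigenvalue_0)
qed

lemma ln_one_plus_ge_quadratic:
  fixes u \<delta> :: real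
  assumes "0 \<le> \<delta>" "\<delta> < 1" "- \<delta> \<le> u"
  shows "u - u\<^sup>2 / (2 * (1 - \<delta>)) \<le> ln (1 + u)"
proof -
  define g where "g x = ln (1 + x) - x + x\<^sup>2 / (2 * (1 - \<delta>))" for x :: real
  have g': "(g has_real_derivative x * (x + \<delta>) / ((1 - \<delta>) * (1 + x))) (at x)" if "- \<delta> \<le> x" for x
  proof -
    have "1 + x > 0"
      using that assms by linarith
    then have "(g has_real_derivative 1 / (1 + x) - 1 + x / (1 - \<delta>)) (at x)"
      unfolding g_def using assms by (auto intro!: derivative_eq_intros) (simp add: field_simps)
    moreover have "1 / (1 + x) - 1 + x / (1 - \<delta>) = x * (x + \<delta>) / ((1 - \<delta>) * (1 + x))"
      using \<open>1 + x > 0\<close> assms by (simp add: divide_simps) (simp add: algebra_simps)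
    ultimately show ?thesis
      by simp
  qed
  have "g 0 \<le> g u"
  proof (cases "0 \<le> u")
    case True
    show ?thesis
    proof (rule DERIV_nonneg_imp_nondecreasing[OF True])
      fix x assume "0 \<le> x" "x \<le> u"
      then show "\<exists>y. (g has_real_derivative y) (at x) \<and> 0 \<le> y"
        using g'[of x] assms by (auto intro!: divide_nonneg_pos mult_nonneg_nonneg)
    qed
  next
    case False
    show ?thesis
    proof (rule DERIV_nonpos_imp_nonincreasing[of u 0])
      show "u \<le> 0"
        using False by simp
      fix x assume "u \<le> x" "x \<le> 0"
      then show "\<exists>y. (g has_real_derivative y) (at x) \<and> y \<le> 0"
        using g'[of x] assms \<open>u \<le> x\<close> by (auto intro!: divide_nonpos_pos mult_nonpos_nonneg)
    qed
  qed
  then show ?thesis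
    by (simp add: g_def)
qed

text \<open>The linear terms cancel because \<open>\<Sum>\<^sub>k t\<^sub>k = 0\<close>, and the remaining first-order term
  \<open>N s / r\<close> beats the quadratic remainder because \<open>N r = N - 1 > 5 / 2\<close>.\<close>
lemma sum_ln_one_plus_nonneg:
  fixes t :: "'n::finite \<Rightarrow> real"
  defines "N \<equiv> real CARD('n)"
  defines "r \<equiv> (N - 1) / N"
  assumes "N \<ge> 4" and "(\<Sum>k\<in>UNIV. t k) = 0" and "(\<Sum>k\<in>UNIV. (t k)\<^sup>2) \<le> s"
    and "0 \<le> s" "s \<le> 1 / 256" and "\<And>k. \<bar>t k\<bar> \<le> 1 / 16"
  shows "0 \<le> (\<Sum>k\<in>UNIV. ln (1 + (2 * t k + s) / r))"
proof -
  define u where "u k = (2 * t k + s) / r" for k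
  have r: "3 / 4 \<le> r" "r \<le> 1" "N * r = N - 1"
    using assms(3) by (auto simp: r_def field_simps)
  have "- (1 / 5) \<le> u k" for k
    using assms(6) assms(8)[of k] r unfolding u_def by (simp add: field_simps abs_le_iff)
  then have "u k - 5 / 8 * (u k)\<^sup>2 \<le> ln (1 + u k)" for k
    using ln_one_plus_ge_quadratic[of "1 / 5" "u k"] by simp
  then have "(\<Sum>k\<in>UNIV. u k - 5 / 8 * (u k)\<^sup>2) \<le> (\<Sum>k\<in>UNIV. ln (1 + u k))"
    by (intro sum_mono)
  also have "(\<Sum>k\<in>UNIV. u k - 5 / 8 * (u k)\<^sup>2) = (\<Sum>k\<in>UNIV. u k) - 5 / 8 * (\<Sum>k\<in>UNIV. (u k)\<^sup>2)"
    by (simp add: sum_subtractf sum_distrib_left)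
  also have "(\<Sum>k\<in>UNIV. u k) = N * s / r"
    using assms(4) by (simp add: u_def sum_divide_distrib[symmetric] sum.distrib
        sum_distrib_left[symmetric] N_def)
  finally have lower: "N * s / r - 5 / 8 * (\<Sum>k\<in>UNIV. (u k)\<^sup>2) \<le> (\<Sum>k\<in>UNIV. ln (1 + u k))" .
  have "(\<Sum>k\<in>UNIV. (u k)\<^sup>2)
      = (4 * (\<Sum>k\<in>UNIV. (t k)\<^sup>2) + 4 * s * (\<Sum>k\<in>UNIV. t k) + N * s\<^sup>2) / r\<^sup>2"
    by (simp add: u_def power_divide sum_divide_distrib[symmetric] power2_sum sum.distrib
        sum_distrib_left N_def algebra_simps)
      (simp add: sum_distrib_left sum_distrib_right mult_ac)
  also have "\<dots> \<le> (4 * s + N * s\<^sup>2) / r\<^sup>2"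
    using assms(4,5) r by (simp add: divide_right_mono)
  finally have sum_sq: "(\<Sum>k\<in>UNIV. (u k)\<^sup>2) \<le> (4 * s + N * s\<^sup>2) / r\<^sup>2" .
  have "N * s \<le> N / 256"
    using assms(3,7) mult_left_mono[of s "1 / 256" N] by simp
  then have "0 \<le> N * r - 5 / 2 - 5 / 8 * (N * s)"
    using assms(3) r(3) by linarith
  then have "0 \<le> s * (N * r - 5 / 2 - 5 / 8 * (N * s)) / r\<^sup>2"
    using assms(6) by simp
  also have "\<dots> = N * s / r - 5 / 8 * ((4 * s + N * s\<^sup>2) / r\<^sup>2)"
    using r by (simp add: field_simps power2_eq_square)
  also have "\<dots> \<le> (\<Sum>k\<in>UNIV. ln (1 + u k))"
    using lower sum_sq by linarith
  finally show ?thesis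
    by (simp add: u_def)
qed

lemma sum_inner_bary_diff_ebasis: "(\<Sum>k\<in>UNIV. d \<bullet> (bary - ebasis k :: real^'n::finite)) = 0"
  unfolding inner_sum_right[symmetric] by (simp add: sum_diff_ebasis)

lemma sum_inner_bary_diff_ebasis_sq_le:
  "(\<Sum>k\<in>UNIV. (d \<bullet> (bary - ebasis k :: real^'n::finite))\<^sup>2) \<le> d \<bullet> d"
proof -
  have "(\<Sum>k\<in>UNIV. (d \<bullet> (bary - ebasis k :: real^'n))\<^sup>2) = d \<bullet> d - real CARD('n) * (bary \<bullet> d)\<^sup>2"
    using arg_cong[OF sum_outer_diff_ebasis[of bary d], of "inner d"]
    by (simp add: inner_sum_right inner_diff_right power2_eq_square inner_commute)
  then show ?thesis
    by simp
qed

lemma abs_inner_bary_diff_ebasis_le: "\<bar>d \<bullet> (bary - ebasis k :: real^'n::finite)\<bar> \<le> norm d"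
proof -
  have "(norm (bary - ebasis k :: real^'n))\<^sup>2 \<le> 1\<^sup>2"
    using basis_sqdist_bary[of k] by (simp add: basis_sqdist_def power2_norm_eq_inner)
  then have "norm (bary - ebasis k :: real^'n) \<le> 1"
    by (rule power2_le_imp_le) simp
  then show ?thesis
    using Cauchy_Schwarz_ineq2[of d "bary - ebasis k"]
      mult_left_le[of "norm (bary - ebasis k)" "norm d"] by simp
qed

lemma basis_sqdist_bary_add:
  "basis_sqdist (bary + d) k
    = (real CARD('n) - 1) / real CARD('n) + 2 * (d \<bullet> (bary - ebasis k))
      + d \<bullet> (d :: real^'n::finite)"
proof -
  have "bary + d - ebasis k = (bary - ebasis k) + d"
    by simp
  then show ?thesis
    unfolding basis_sqdist_def basis_sqdist_bary[of k, unfolded basis_sqdist_def, symmetric]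
    by (simp only:) (simp add: inner_add_left inner_add_right inner_commute)
qed

lemma local_min_flog_bary:
  assumes "CARD('n::finite) \<ge> 4"
  shows "local_min flog (bary :: real^'n)"
  unfolding local_min_def
proof (intro exI[of _ "1 / 16"] conjI ballI)
  fix y :: "real^'n"
  assume "y \<in> ball bary (1 / 16)"
  define N where "N = real CARD('n)"
  define r where "r = (N - 1) / N"
  define d where "d = y - bary"
  define t where "t k = d \<bullet> (bary - ebasis k)" for k
  have N: "N \<ge> 4"
    using assms by (simp add: N_def)
  have r: "3 / 4 \<le> r" "r \<le> 1"
    using N by (auto simp: r_def field_simps)
  have "norm d < 1 / 16"
    using \<open>y \<in> ball bary (1 / 16)\<close> by (simp add: d_def dist_norm norm_minus_commute)
  then have "d \<bullet> d \<le> 1 / 256"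
    using power_strict_mono[of "norm d" "1 / 16" 2]
    by (simp add: power2_norm_eq_inner[symmetric] power_divide)
  have t_bound: "\<bar>t k\<bar> \<le> 1 / 16" for k
    using abs_inner_bary_diff_ebasis_le[of d k] \<open>norm d < 1 / 16\<close> by (simp add: t_def)
  have u_pos: "0 < 1 + (2 * t k + d \<bullet> d) / r" for k
  proof -
    have "0 < r + (2 * t k + d \<bullet> d)"
      using abs_le_D2[OF t_bound[of k]] r inner_ge_zero[of d] by linarith
    then show ?thesis
      using r by (simp add: field_simps)
  qed
  have q: "basis_sqdist y k = r * (1 + (2 * t k + d \<bullet> d) / r)" for k
  proof -
    have "basis_sqdist y k = r + 2 * t k + d \<bullet> d"
      using basis_sqdist_bary_add[of d k] by (simp add: d_def t_def r_def N_def)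
    then show ?thesis
      using r by (simp add: field_simps)
  qed
  have "y \<notin> range ebasis"
  proof
    assume "y \<in> range ebasis"
    then obtain k where "basis_sqdist y k = 0"
      by (auto simp: basis_sqdist_def)
    then show False
      using u_pos[of k] r by (simp add: q)
  qed
  then have "flog y = (\<Sum>k::'n\<in>UNIV. ln r) + (\<Sum>k\<in>UNIV. ln (1 + (2 * t k + d \<bullet> d) / r))"
    using u_pos r by (simp add: flog_eq_sum_ln q ln_mult_pos sum.distrib)
  moreover have "flog (bary :: real^'n) = (\<Sum>k::'n\<in>UNIV. ln r)"
    using assms by (simp add: flog_eq_sum_ln bary_notin_range_ebasis basis_sqdist_bary r_def N_def)
  moreover have "0 \<le> (\<Sum>k\<in>UNIV. ln (1 + (2 * t k + d \<bullet> d) / r))"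
    using sum_ln_one_plus_nonneg[of t "d \<bullet> d"] N t_bound \<open>d \<bullet> d \<le> 1 / 256\<close>
      sum_inner_bary_diff_ebasis[of d] sum_inner_bary_diff_ebasis_sq_le[of d]
    by (simp add: N_def r_def t_def)
  ultimately show "flog (bary :: real^'n) \<le> flog y"
    by linarith
qed simp

section \<open>The saddle points on the segments from the barycentre to the vertices\<close>

lemma basis_sqdist_segment:
  fixes i :: "'n::finite" and t :: real
  defines "N \<equiv> real CARD('n)" and "x \<equiv> bary + t *\<^sub>R (ebasis i - bary)"
  shows "basis_sqdist x i = (1 - t)\<^sup>2 * (N - 1) / N"
    and "k \<noteq> i \<Longrightarrow> basis_sqdist x k = ((N - 1) * (1 + t\<^sup>2) + 2 * t) / N"
proof -
  have xx: "x \<bullet> x = 1 / N + t\<^sup>2 * (N - 1) / N"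
    by (simp add: x_def inner_add_left inner_add_right inner_bary_bary inner_bary_ebasis_diff
        inner_commute inner_ebasis_diff_bary_self N_def power2_eq_square)
  have xk: "x $ k = 1 / N + t * ((if k = i then 1 else 0) - 1 / N)" for k
    by (simp add: x_def N_def)
  have "N \<noteq> 0"
    by (simp add: N_def)
  then show "basis_sqdist x i = (1 - t)\<^sup>2 * (N - 1) / N"
    "k \<noteq> i \<Longrightarrow> basis_sqdist x k = ((N - 1) * (1 + t\<^sup>2) + 2 * t) / N"
    by (simp_all only: basis_sqdist_expand xx xk) (simp_all add: field_simps power2_eq_square)
qed

lemma Qpt_minus:
  assumes "CARD('n::finite) \<ge> 2"
  defines "N \<equiv> real CARD('n)"
  shows "Qpt i - bary = ((N - 3) / (N - 1)) *\<^sub>R (ebasis i - (bary :: real^'n))"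
    and "Qpt i - ebasis i = ((N - 3) / (N - 1) - 1) *\<^sub>R (ebasis i - (bary :: real^'n))"
proof -
  let ?t = "(N - 3) / (N - 1)"
  have "bary + ?t *\<^sub>R (ebasis i - bary) = (1 - ?t) *\<^sub>R bary + ?t *\<^sub>R (ebasis i :: real^'n)"
    by (simp add: algebra_simps)
  moreover have "1 - ?t = 2 / (N - 1)"
    using assms by (simp add: field_simps)
  ultimately have "Qpt i = bary + ?t *\<^sub>R (ebasis i - (bary :: real^'n))"
    by (simp add: Qpt_def N_def)
  then show "Qpt i - bary = ?t *\<^sub>R (ebasis i - (bary :: real^'n))"
    and "Qpt i - ebasis i = (?t - 1) *\<^sub>R (ebasis i - (bary :: real^'n))"
    by (simp_all add: algebra_simps)
qed

lemma basis_sqdist_Qpt: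
  assumes "CARD('n::finite) \<ge> 4"
  defines "N \<equiv> real CARD('n)"
  shows "basis_sqdist (Qpt i :: real^'n) i = 4 / (N * (N - 1))"
    and "k \<noteq> i \<Longrightarrow> basis_sqdist (Qpt i :: real^'n) k = 2 * (N - 2) / N"
proof -
  let ?t = "(N - 3) / (N - 1)"
  have N: "N \<ge> 4" and Q: "Qpt i = bary + ?t *\<^sub>R (ebasis i - (bary :: real^'n))"
    using assms Qpt_minus(1)[of i] by (simp_all add: N_def algebra_simps)
  have "(1 - ?t)\<^sup>2 * (N - 1) / N = 4 / (N * (N - 1))"
    using N by (simp add: divide_simps) (simp add: algebra_simps power2_eq_square)
  then show "basis_sqdist (Qpt i :: real^'n) i = 4 / (N * (N - 1))"
    using basis_sqdist_segment(1)[where i=i and t="?t"] by (simp add: Q N_def)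
  have "((N - 1) * (1 + ?t\<^sup>2) + 2 * ?t) / N = 2 * (N - 2) / N"
    using N by (simp add: divide_simps) (simp add: algebra_simps power2_eq_square)
  then show "k \<noteq> i \<Longrightarrow> basis_sqdist (Qpt i :: real^'n) k = 2 * (N - 2) / N"
    using basis_sqdist_segment(2)[where i=i and t="?t"] by (simp add: Q N_def)
qed

lemma Qpt_notin_range_ebasis:
  assumes "CARD('n::finite) \<ge> 4"
  shows "(Qpt i :: real^'n) \<notin> range ebasis"
proof
  assume "Qpt i \<in> range (ebasis :: 'n \<Rightarrow> real^'n)"
  then obtain k where "basis_sqdist (Qpt i :: real^'n) k = 0"
    by (auto simp: basis_sqdist_def)
  then show False
    using assms basis_sqdist_Qpt(1)[OF assms, of i] basis_sqdist_Qpt(2)[OF assms]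
    by (cases "k = i") auto
qed

lemma grad_flog_Qpt:
  assumes "CARD('n::finite) \<ge> 4"
  shows "grad_flog (Qpt i :: real^'n) = 0"
proof -
  define N where "N = real CARD('n)"
  let ?s = "2 * (N - 2) / N" and ?r = "4 / (N * (N - 1))" and ?t = "(N - 3) / (N - 1)"
  have N: "N \<ge> 4" and card2: "CARD('n) \<ge> 2"
    using assms by (simp_all add: N_def)
  have "grad_flog (Qpt i :: real^'n)
      = ((2 * N / ?s) * ?t + (2 / ?r - 2 / ?s) * (?t - 1)) *\<^sub>R (ebasis i - bary)"
    using grad_flog_eq[OF basis_sqdist_Qpt(2)[OF assms] basis_sqdist_Qpt(1)[OF assms]] assms
    unfolding Qpt_minus[OF card2] N_def by (simp add: scaleR_add_left)
  also have "(2 * N / ?s) * ?t + (2 / ?r - 2 / ?s) * (?t - 1) = 0"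
    using N by (simp add: divide_simps) (simp add: algebra_simps power2_eq_square)
  finally show ?thesis
    by simp
qed

lemma hess_flog_Qpt:
  assumes "CARD('n::finite) \<ge> 4"
  defines "N \<equiv> real CARD('n)"
  defines "c \<equiv> N ^ 3 / (N - 2)\<^sup>2"
  shows "hess_flog (Qpt i :: real^'n) h = (c * (N - 3) / 2) *\<^sub>R h + (c * (bary \<bullet> h)) *\<^sub>R bary
      - (c * (N - 3) * ((ebasis i - bary) \<bullet> h)) *\<^sub>R (ebasis i - bary)"
proof -
  define s where "s = 2 * (N - 2) / N"
  define r where "r = 4 / (N * (N - 1))"
  define t where "t = (N - 3) / (N - 1)"
  define d :: "real^'n" where "d = ebasis i - bary"
  have N: "N \<ge> 4" and card2: "CARD('n) \<ge> 2"
    using assms by (simp_all add: N_def)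
  have "s > 0" "r > 0"
    using N by (auto simp: s_def r_def)
  have "hess_flog (Qpt i :: real^'n) h = ((N - 1) * (2 / s) + 2 / r - 4 / s\<^sup>2) *\<^sub>R h
      + (4 * N / s\<^sup>2 * (bary \<bullet> h)) *\<^sub>R bary
      - ((4 * N / s\<^sup>2 * t\<^sup>2 + (4 / r\<^sup>2 - 4 / s\<^sup>2) * (t - 1)\<^sup>2) * (d \<bullet> h)) *\<^sub>R d"
    using hess_flog_eq[where i=i and h=h,
        OF basis_sqdist_Qpt(2)[OF assms(1)] basis_sqdist_Qpt(1)[OF assms(1)]]
      \<open>s > 0\<close> \<open>r > 0\<close>
    unfolding Qpt_minus[OF card2] N_def[symmetric] s_def[symmetric] r_def[symmetric]
      t_def[symmetric] d_def[symmetric]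
    by (simp add: vec_eq_iff) (simp add: field_simps power2_eq_square)
  moreover have "(N - 1) * (2 / s) + 2 / r - 4 / s\<^sup>2 = c * (N - 3) / 2"
    and "4 * N / s\<^sup>2 = c"
    and "4 * N / s\<^sup>2 * t\<^sup>2 + (4 / r\<^sup>2 - 4 / s\<^sup>2) * (t - 1)\<^sup>2 = c * (N - 3)"
    using N unfolding c_def s_def r_def t_def
    by (simp_all add: divide_simps) (simp_all add: algebra_simps power2_eq_square power3_eq_cube)
  ultimately show ?thesis
    by (simp add: d_def)
qed

lemma Qpt_nondegenerate_index_one:
  assumes "CARD('n::finite) \<ge> 4"
  shows "nondegenerate_critical_point flog (Qpt i :: real^'n)
    \<and> (\<exists>H. has_hessian flog H (Qpt i :: real^'n) \<and> neg_index H = 1)"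
proof -
  define N where "N = real CARD('n)"
  define c where "c = N ^ 3 / (N - 2)\<^sup>2"
  define d :: "real^'n" where "d = ebasis i - bary"
  define H where "H = matrix (hess_flog (Qpt i :: real^'n))"
  note Q = Qpt_notin_range_ebasis[OF assms, of i]
  have N: "N \<ge> 4"
    using assms by (simp add: N_def)
  have H: "H *v h = (c * (N - 3) / 2) *\<^sub>R h + (c * (bary \<bullet> h)) *\<^sub>R bary
      + (- c * (N - 3) * (d \<bullet> h)) *\<^sub>R d" for h
    using hess_flog_Qpt[OF assms, of i h]
    by (simp add: H_def matrix_hess_flog[OF Q] N_def c_def d_def)
  have "c > 0"
    using N by (simp add: c_def)
  then have "c * (N - 3) / 2 > 0"
    using N by simp
  moreover have "c * (N - 3) / 2 + c * ((bary :: real^'n) \<bullet> bary) > 0"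
    using calculation \<open>c > 0\<close> N by (simp add: inner_bary_bary N_def[symmetric] add_pos_pos)
  moreover have "c * (N - 3) / 2 + - c * (N - 3) * (d \<bullet> d) < 0"
  proof -
    have "c * (N - 3) / 2 + - c * (N - 3) * (d \<bullet> d) = - c * (N - 3) * (N - 2) / (2 * N)"
      using N by (simp add: d_def inner_ebasis_diff_bary_self N_def[symmetric] field_simps)
    then show ?thesis
      using N \<open>c > 0\<close> by (simp add: mult_pos_pos)
  qed
  moreover have "d \<noteq> 0"
    using N inner_ebasis_diff_bary_self[of i] by (auto simp: d_def N_def)
  ultimately have "neg_index H = 1" "det H \<noteq> 0"
    using rank_two_update_index_one[OF H inner_bary_ebasis_diff[of i, folded d_def]] by auto
  then show ?thesis
    using critical_point_flog[OF Q grad_flog_Qpt[OF assms]] has_hessian_flog[OF Q]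
    by (auto simp: nondegenerate_critical_point_def H_def)
qed

section \<open>Global minima of the product\<close>

lemma Fprod_nonneg: "0 \<le> Fprod x"
  by (simp add: Fprod_def prod_nonneg)

lemma Fprod_eq_0_iff: "Fprod x = 0 \<longleftrightarrow> x \<in> range ebasis"
  by (auto simp: Fprod_def)

lemma Fprod_global_minima:
  "{x :: real^'n::finite. \<forall>y :: real^'n. Fprod x \<le> Fprod y} = range ebasis"
proof (intro set_eqI iffI)
  fix x :: "real^'n"
  obtain i :: 'n where True by simp
  assume "x \<in> {x. \<forall>y :: real^'n. Fprod x \<le> Fprod y}"
  then have "Fprod x \<le> Fprod (ebasis i :: real^'n)"
    by simp
  then show "x \<in> range ebasis"
    using Fprod_nonneg[of x] Fprod_eq_0_iff[of "ebasis i :: real^'n"] Fprod_eq_0_iff[of x] by simp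
qed (auto simp: Fprod_eq_0_iff[THEN iffD2] Fprod_nonneg)

theorem proposition7p3:
  assumes "CARD('n::finite) \<ge> 4"
  shows "{x::real^'n. \<forall>y::real^'n. Fprod x \<le> Fprod y} = range ebasis
    \<and> critical_point flog (bary::real^'n)
    \<and> (\<exists>H. has_hessian flog H (bary::real^'n)
          \<and> H *v bary = (2 * real CARD('n)^2 / (real CARD('n) - 1)) *\<^sub>R bary
          \<and> eig_mult H (2 * real CARD('n)^2 / (real CARD('n) - 1)) = 1
          \<and> eig_mult H (2 * (real CARD('n) - 3) * (real CARD('n) / (real CARD('n) - 1))^2)
              = CARD('n) - 1)
    \<and> nondegenerate_critical_point flog (bary::real^'n)
    \<and> local_min flog (bary::real^'n)
    \<and> (\<forall>i::'n. nondegenerate_critical_point flog (Qpt i)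
          \<and> (\<exists>H. has_hessian flog H (Qpt i) \<and> neg_index H = 1))"
proof -
  have bary: "(bary :: real^'n) \<notin> range ebasis"
    using assms by (intro bary_notin_range_ebasis) simp
  have critical: "critical_point flog (bary :: real^'n)"
    using critical_point_flog[OF bary grad_flog_bary] .
  note hessian = has_hessian_flog[OF bary] and spectrum = hess_flog_bary_spectrum[OF assms]
  show ?thesis
    using Fprod_global_minima critical hessian spectrum local_min_flog_bary[OF assms]
      Qpt_nondegenerate_index_one[OF assms]
    unfolding nondegenerate_critical_point_def by blast
qed

end
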